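(* Let $p>2$ and fix $H\ge1$, $P,L\ge0$. There exist $M>0$ and $\bar\ell>0$ such that, for every $\ell\in(0,\bar\ell)$ and every positive bound-state $u$ on the regular single-knot graph $\mathcal G$ of length $\ell$ with $H$ half-lines, $P$ pendants and $L$ loops, $\|u\|_{L^\infty(\mathcal K)}\le M$, where $\mathcal K$ is the compact core of $\mathcal G$.
   Context: A single-knot metric graph consists of $H\ge1$ half-lines, $P\ge0$ pendants and $L\ge0$ loops attached at a common vertex $\mathbf 0$; regular of length $\ell$: pendants of length $\ell$, loops of length $2\ell$. The compact core is the union of all bounded edges. A bound-state is a nontrivial $u\in H^1(\mathcal G)$ with $\int_{\mathcal G}u'\eta'+u\eta-|u|^{p-2}u\eta=0$ for all $\eta\in H^1(\mathcal G)$. *)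

theory Defs
  imports "HOL-Analysis.Analysis"
begin

definition H1_on :: "real set \<Rightarrow> (real \<Rightarrow> real) \<Rightarrow> (real \<Rightarrow> real) \<Rightarrow> bool" where
  "H1_on I u du \<longleftrightarrow>
     set_borel_measurable lborel I u \<and> set_borel_measurable lborel I du \<and>
     set_integrable lborel I (\<lambda>x. (u x)\<^sup>2) \<and> set_integrable lborel I (\<lambda>x. (du x)\<^sup>2) \<and>
     (\<forall>x\<in>I. \<forall>y\<in>I. x \<le> y \<longrightarrow>
        set_integrable lborel {x..y} du \<and> u y - u x = (LINT t:{x..y}|lborel. du t))"

text \<open>A function on the single-knot graph: (half-line components, pendant components, loop
  components). Half-line i is [0,\<infinity>), pendant j is [0,l], loop k is [0,2l]; coordinate 0 of
  every edge (and 2l of every loop) is the vertex.\<close>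
type_synonym gfun = "(nat \<Rightarrow> real \<Rightarrow> real) \<times> (nat \<Rightarrow> real \<Rightarrow> real) \<times> (nat \<Rightarrow> real \<Rightarrow> real)"

definition hl :: "gfun \<Rightarrow> nat \<Rightarrow> real \<Rightarrow> real" where "hl u = fst u"
definition pd :: "gfun \<Rightarrow> nat \<Rightarrow> real \<Rightarrow> real" where "pd u = fst (snd u)"
definition lp :: "gfun \<Rightarrow> nat \<Rightarrow> real \<Rightarrow> real" where "lp u = snd (snd u)"

definition H1_graph :: "nat \<Rightarrow> nat \<Rightarrow> nat \<Rightarrow> real \<Rightarrow> gfun \<Rightarrow> gfun \<Rightarrow> bool" where
  "H1_graph H P L l u du \<longleftrightarrow>
     (\<forall>i<H. H1_on {0..} (hl u i) (hl du i)) \<and>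
     (\<forall>j<P. H1_on {0..l} (pd u j) (pd du j)) \<and>
     (\<forall>k<L. H1_on {0..2*l} (lp u k) (lp du k)) \<and>
     (\<exists>c. (\<forall>i<H. hl u i 0 = c) \<and> (\<forall>j<P. pd u j 0 = c) \<and>
          (\<forall>k<L. lp u k 0 = c \<and> lp u k (2*l) = c))"

definition graph_int :: "nat \<Rightarrow> nat \<Rightarrow> nat \<Rightarrow> real \<Rightarrow> (real \<Rightarrow> real \<Rightarrow> real \<Rightarrow> real \<Rightarrow> real)
    \<Rightarrow> gfun \<Rightarrow> gfun \<Rightarrow> gfun \<Rightarrow> gfun \<Rightarrow> real" where
  "graph_int H P L l F u du eta deta =
     (\<Sum>i<H. LINT x:{0..}|lborel. F (hl u i x) (hl du i x) (hl eta i x) (hl deta i x)) +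
     (\<Sum>j<P. LINT x:{0..l}|lborel. F (pd u j x) (pd du j x) (pd eta j x) (pd deta j x)) +
     (\<Sum>k<L. LINT x:{0..2*l}|lborel. F (lp u k x) (lp du k x) (lp eta k x) (lp deta k x))"

definition nontrivial_g :: "nat \<Rightarrow> nat \<Rightarrow> nat \<Rightarrow> real \<Rightarrow> gfun \<Rightarrow> bool" where
  "nontrivial_g H P L l u \<longleftrightarrow>
     (\<exists>i<H. \<exists>x\<ge>0. hl u i x \<noteq> 0) \<or> (\<exists>j<P. \<exists>x\<in>{0..l}. pd u j x \<noteq> 0) \<or>
     (\<exists>k<L. \<exists>x\<in>{0..2*l}. lp u k x \<noteq> 0)"

definition bound_state :: "real \<Rightarrow> nat \<Rightarrow> nat \<Rightarrow> nat \<Rightarrow> real \<Rightarrow> gfun \<Rightarrow> bool" where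
  "bound_state p H P L l u \<longleftrightarrow>
     (\<exists>du. H1_graph H P L l u du) \<and> nontrivial_g H P L l u \<and>
     (\<forall>du eta deta. H1_graph H P L l u du \<longrightarrow> H1_graph H P L l eta deta \<longrightarrow>
        graph_int H P L l (\<lambda>a da e de. da * de + a * e - \<bar>a\<bar> powr (p - 2) * a * e) u du eta deta = 0)"

definition positive_g :: "nat \<Rightarrow> nat \<Rightarrow> nat \<Rightarrow> real \<Rightarrow> gfun \<Rightarrow> bool" where
  "positive_g H P L l u \<longleftrightarrow>
     (\<forall>i<H. \<forall>x\<ge>0. hl u i x > 0) \<and> (\<forall>j<P. \<forall>x\<in>{0..l}. pd u j x > 0) \<and>
     (\<forall>k<L. \<forall>x\<in>{0..2*l}. lp u k x > 0)"

text \<open>Sup norm on the compact core (pendants and loops); u is continuous on each edge.\<close>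
definition core_bounded_by :: "nat \<Rightarrow> nat \<Rightarrow> real \<Rightarrow> gfun \<Rightarrow> real \<Rightarrow> bool" where
  "core_bounded_by P L l u M \<longleftrightarrow>
     (\<forall>j<P. \<forall>x\<in>{0..l}. \<bar>pd u j x\<bar> \<le> M) \<and> (\<forall>k<L. \<forall>x\<in>{0..2*l}. \<bar>lp u k x\<bar> \<le> M)"

end

(*
  A positive bound state is a classical solution of u'' = u - u^(p-1) on every edge, and the
  energy u'^2/2 - u^2/2 + u^p/p is constant along each edge.  On a half-line the energy vanishes:
  otherwise the virial identity (u u')' = 2 E + O(u^2) and u \<in> L^2 would keep |E| T bounded for
  all T.  Zero energy bounds the common vertex value c and gives u'(0) \<ge> -c on the half-lines.
  The pendants and loops contain a critical point of u, and their outgoing derivative at the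
  vertex is again \<ge> -c: for nonpositive energy |u'(0)| \<le> c, and for positive energy u'(0) \<ge> 0,
  since a decrease of u up to the first critical point would keep u above the level where
  u'' \<le> 0.  By Kirchhoff's condition the outgoing derivatives sum to zero, so each of them is
  also bounded above.  This bounds the energy on every compact edge, and hence u, whose maximum
  lies at the vertex or at a critical point.  None of the bounds depends on the length l.
*)

theory Submission
  imports Defs
begin

section \<open>Piecewise linear test functions\<close>

definition ramp :: "real \<Rightarrow> real \<Rightarrow> real" where
  "ramp s t = max 0 (t - s)"

definition pwl :: "real \<Rightarrow> (real \<times> real) list \<Rightarrow> real \<Rightarrow> real" where
  "pwl g0 rs t = g0 + (\<Sum>(c, s)\<leftarrow>rs. c * ramp s t)"

definition pwl_deriv :: "(real \<times> real) list \<Rightarrow> real \<Rightarrow> real" where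
  "pwl_deriv rs t = (\<Sum>(c, s)\<leftarrow>rs. if s < t then c else 0)"

lemma pwl_Nil [simp]: "pwl g0 [] t = g0"
  by (simp add: pwl_def)

lemma pwl_deriv_Nil [simp]: "pwl_deriv [] t = 0"
  by (simp add: pwl_deriv_def)

lemma continuous_on_ramp: "continuous_on A (ramp s)"
  unfolding ramp_def by (intro continuous_intros)

lemma continuous_on_pwl: "continuous_on A (pwl g0 rs)"
proof -
  have "continuous_on A (\<lambda>t. \<Sum>(c, s)\<leftarrow>rs. c * ramp s t)"
    by (induction rs) (auto intro!: continuous_intros continuous_on_ramp)
  then show ?thesis
    unfolding pwl_def by (intro continuous_intros)
qed

lemma ramp_has_integral:
  assumes "x \<le> y"
  shows "((\<lambda>t. if s < t then 1 else 0::real) has_integral (ramp s y - ramp s x)) {x..y}"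
proof (rule fundamental_theorem_of_calculus_interior_strong[where S = "{s}"])
  fix t assume t: "t \<in> {x<..<y} - {s}"
  show "(ramp s has_vector_derivative (if s < t then 1 else 0)) (at t)"
  proof (cases "s < t")
    case True
    have "((\<lambda>t. t - s) has_real_derivative 1) (at t)"
      by (auto intro!: derivative_eq_intros)
    then have "(ramp s has_real_derivative 1) (at t)"
      by (rule has_field_derivative_transform_within_open[where S = "{s<..}"])
        (use True in \<open>auto simp: ramp_def\<close>)
    then show ?thesis
      using True by (simp add: has_real_derivative_iff_has_vector_derivative)
  next
    case False
    with t have "t < s" by auto
    have "(ramp s has_real_derivative 0) (at t)"
      by (rule has_field_derivative_transform_within_open[OF DERIV_const, where S = "{..<s}"])
        (use \<open>t < s\<close> in \<open>auto simp: ramp_def\<close>)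
    then show ?thesis
      using False by (simp add: has_real_derivative_iff_has_vector_derivative)
  qed
qed (use assms continuous_on_ramp in auto)

lemma pwl_deriv_has_integral:
  assumes "x \<le> y"
  shows "(pwl_deriv rs has_integral (pwl g0 rs y - pwl g0 rs x)) {x..y}"
proof (induction rs)
  case Nil
  then show ?case by (simp add: pwl_deriv_def pwl_def)
next
  case (Cons r rs)
  obtain c s where r: "r = (c, s)" by force
  have "((\<lambda>t. c * (if s < t then 1 else 0) + pwl_deriv rs t) has_integral
      (c * (ramp s y - ramp s x) + (pwl g0 rs y - pwl g0 rs x))) {x..y}"
    by (intro has_integral_add has_integral_mult_right ramp_has_integral Cons assms)
  moreover have "(\<lambda>t. c * (if s < t then 1 else 0) + pwl_deriv rs t) = pwl_deriv ((c, s) # rs)"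
    by (auto simp: pwl_deriv_def)
  ultimately show ?case
    unfolding r by (simp add: pwl_def algebra_simps)
qed

lemma borel_measurable_pwl_deriv: "pwl_deriv rs \<in> borel_measurable borel"
  unfolding pwl_deriv_def by (induction rs) auto

lemma abs_pwl_deriv_le: "\<bar>pwl_deriv rs t\<bar> \<le> (\<Sum>(c, s)\<leftarrow>rs. \<bar>c\<bar>)"
  unfolding pwl_deriv_def by (induction rs) (auto intro!: order.trans[OF abs_triangle_ineq])

lemma set_integrable_pwl_deriv: "set_integrable lborel {x..y} (pwl_deriv rs)"
proof (rule set_integrable_bound[where f = "\<lambda>_. \<Sum>(c, s)\<leftarrow>rs. \<bar>c\<bar>"])
  show "set_borel_measurable lborel {x..y} (pwl_deriv rs)"
    unfolding set_borel_measurable_def using borel_measurable_pwl_deriv by measurable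
qed (auto intro!: borel_integrable_atLeastAtMost' AE_I2 order.trans[OF abs_pwl_deriv_le])

lemma set_integrable_pwl_deriv_square: "set_integrable lborel {x..y} (\<lambda>t. (pwl_deriv rs t)\<^sup>2)"
proof (rule set_integrable_bound[where f = "\<lambda>_. (\<Sum>(c, s)\<leftarrow>rs. \<bar>c\<bar>)\<^sup>2"])
  show "set_borel_measurable lborel {x..y} (\<lambda>t. (pwl_deriv rs t)\<^sup>2)"
    unfolding set_borel_measurable_def using borel_measurable_pwl_deriv by measurable
  have "\<bar>pwl_deriv rs t\<bar>\<^sup>2 \<le> (\<Sum>(c, s)\<leftarrow>rs. \<bar>c\<bar>)\<^sup>2" for t
    by (intro power_mono abs_pwl_deriv_le) auto
  then show "AE t in lborel. t \<in> {x..y} \<longrightarrow> norm ((pwl_deriv rs t)\<^sup>2) \<le> norm ((\<Sum>(c, s)\<leftarrow>rs. \<bar>c\<bar>)\<^sup>2)"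
    by (auto intro!: AE_I2)
qed (auto intro!: borel_integrable_atLeastAtMost')

lemma set_lebesgue_integral_eq_has_integral:
  fixes g :: "real \<Rightarrow> real"
  assumes "set_integrable lborel {x..y} g" "(g has_integral I) {x..y}"
  shows "(LINT t:{x..y}|lborel. g t) = I"
  using set_borel_integral_eq_integral(2)[OF assms(1)] assms(2) integral_unique by metis

lemma pwl_diff_eq_integral:
  "x \<le> y \<Longrightarrow> pwl g0 rs y - pwl g0 rs x = (LINT t:{x..y}|lborel. pwl_deriv rs t)"
  using set_lebesgue_integral_eq_has_integral[OF set_integrable_pwl_deriv pwl_deriv_has_integral]
  by simp

lemma pwl_eq_affine:
  "\<forall>(c, s)\<in>set rs. s \<le> t \<Longrightarrow> pwl g0 rs t = g0 + (\<Sum>(c, s)\<leftarrow>rs. c * (t - s))"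
  by (induction rs arbitrary: g0) (auto simp: pwl_def ramp_def)

lemma pwl_at_0: "\<forall>(c, s)\<in>set rs. 0 \<le> s \<Longrightarrow> pwl g0 rs 0 = g0"
  by (induction rs arbitrary: g0) (auto simp: pwl_def ramp_def)

lemma pwl_deriv_beyond_breaks:
  "\<forall>(c, s)\<in>set rs. s \<le> Y \<Longrightarrow> Y < t \<Longrightarrow> pwl_deriv rs t = (\<Sum>(c, s)\<leftarrow>rs. c)"
  by (induction rs) (auto simp: pwl_deriv_def)

lemma pwl_beyond_breaks:
  assumes "\<forall>(c, s)\<in>set rs. s \<le> Y" "Y \<le> t"
  shows "pwl g0 rs t = pwl g0 rs Y + (t - Y) * (\<Sum>(c, s)\<leftarrow>rs. c)"
proof -
  have "(\<Sum>(c, s)\<leftarrow>rs. c * (t - s)) = (\<Sum>(c, s)\<leftarrow>rs. c * (Y - s)) + (t - Y) * (\<Sum>(c, s)\<leftarrow>rs. c)"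
    by (induction rs) (auto simp: algebra_simps)
  moreover have "\<forall>(c, s)\<in>set rs. s \<le> t"
    using assms by auto
  ultimately show ?thesis
    using assms by (simp add: pwl_eq_affine)
qed

definition supported_pwl :: "real \<Rightarrow> real \<Rightarrow> (real \<times> real) list \<Rightarrow> bool" where
  "supported_pwl Y g0 rs \<longleftrightarrow>
     0 \<le> Y \<and> (\<forall>(c, s)\<in>set rs. 0 \<le> s \<and> s \<le> Y) \<and> (\<Sum>(c, s)\<leftarrow>rs. c) = 0 \<and> pwl g0 rs Y = 0"

lemma supported_pwl_vanishes:
  assumes "supported_pwl Y g0 rs"
  shows "Y \<le> t \<Longrightarrow> pwl g0 rs t = 0" and "Y < t \<Longrightarrow> pwl_deriv rs t = 0"
  using assms pwl_beyond_breaks[of rs Y t g0] pwl_deriv_beyond_breaks[of rs Y t]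
  by (auto simp: supported_pwl_def)

lemma H1_on_pwl: "H1_on {0..T} (pwl g0 rs) (pwl_deriv rs)"
  unfolding H1_on_def
proof (intro conjI ballI impI)
  show "set_borel_measurable lborel {0..T} (pwl g0 rs)"
    unfolding set_borel_measurable_def
    using borel_measurable_continuous_onI[OF continuous_on_pwl] by measurable
  show "set_borel_measurable lborel {0..T} (pwl_deriv rs)"
    unfolding set_borel_measurable_def using borel_measurable_pwl_deriv by measurable
  show "set_integrable lborel {0..T} (\<lambda>x. (pwl g0 rs x)\<^sup>2)"
    by (intro borel_integrable_atLeastAtMost' continuous_intros continuous_on_pwl)
qed (auto intro: set_integrable_pwl_deriv set_integrable_pwl_deriv_square pwl_diff_eq_integral)

lemma set_integral_eq_if_vanishing:
  fixes g :: "real \<Rightarrow> real"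
  assumes "B \<subseteq> A" "\<And>t. t \<in> A \<Longrightarrow> t \<notin> B \<Longrightarrow> g t = 0"
  shows "set_integrable M A g \<longleftrightarrow> set_integrable M B g"
    and "(LINT t:A|M. g t) = (LINT t:B|M. g t)"
proof -
  have "(\<lambda>t. indicator A t *\<^sub>R g t) = (\<lambda>t. indicator B t *\<^sub>R g t)"
    using assms by (auto simp: indicator_def fun_eq_iff)
  then show "set_integrable M A g \<longleftrightarrow> set_integrable M B g" "(LINT t:A|M. g t) = (LINT t:B|M. g t)"
    unfolding set_integrable_def set_lebesgue_integral_def by simp_all
qed

lemma H1_on_supported_pwl:
  assumes "supported_pwl Y g0 rs"
  shows "H1_on {0..} (pwl g0 rs) (pwl_deriv rs)"
proof -
  have vanish: "pwl g0 rs t = 0" "pwl_deriv rs t = 0" if "t \<in> {0..}" "t \<notin> {0..Y}" for t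
    using supported_pwl_vanishes[OF assms] that by auto
  have "{0..Y} \<subseteq> {0::real..}"
    by auto
  from set_integral_eq_if_vanishing(1)[OF this, of "\<lambda>t. (pwl g0 rs t)\<^sup>2"]
       set_integral_eq_if_vanishing(1)[OF this, of "\<lambda>t. (pwl_deriv rs t)\<^sup>2"]
  have "set_integrable lborel {0..} (\<lambda>t. (pwl g0 rs t)\<^sup>2)"
       "set_integrable lborel {0..} (\<lambda>t. (pwl_deriv rs t)\<^sup>2)"
    using H1_on_pwl[of Y g0 rs] vanish by (auto simp: H1_on_def)
  moreover have "set_borel_measurable lborel {0..} (pwl g0 rs)"
    "set_borel_measurable lborel {0..} (pwl_deriv rs)"
    unfolding set_borel_measurable_def
    using borel_measurable_continuous_onI[OF continuous_on_pwl] borel_measurable_pwl_deriv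
    by measurable
  ultimately show ?thesis
    unfolding H1_on_def by (auto intro: set_integrable_pwl_deriv pwl_diff_eq_integral)
qed

lemma H1_on_restrict:
  assumes "H1_on {0..} u w"
  shows "H1_on {0..T} u w"
proof -
  have sub: "{0..T} \<in> sets lborel" "{0..T} \<subseteq> {0::real..}"
    by auto
  show ?thesis
    using assms set_integrable_subset[OF _ sub] set_borel_measurable_subset[OF _ sub]
    unfolding H1_on_def by auto
qed

lemma H1_on_primitive:
  assumes "H1_on I u w" "x \<in> I" "y \<in> I" "x \<le> y"
  shows "set_integrable lborel {x..y} w" "u y - u x = (LINT t:{x..y}|lborel. w t)"
  using assms unfolding H1_on_def by blast+

lemma H1_on_square_integrable: "H1_on I u w \<Longrightarrow> set_integrable lborel I (\<lambda>t. (u t)\<^sup>2)"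
  unfolding H1_on_def by blast

lemma continuous_on_H1_on:
  assumes "H1_on {0..T} u w"
  shows "continuous_on {0..T} u"
proof (cases "0 \<le> T")
  case True
  have eq: "u t = u 0 + integral {0..t} w" if "t \<in> {0..T}" for t
  proof -
    have "0 \<in> {0..T}" "0 \<le> t"
      using that by auto
    note prim = H1_on_primitive[OF assms this(1) that this(2)]
    show ?thesis
      using prim(2) set_borel_integral_eq_integral(2)[OF prim(1)] by linarith
  qed
  have "w integrable_on {0..T}"
    using True H1_on_primitive(1)[OF assms, of 0 T] set_borel_integral_eq_integral(1) by simp
  then have "continuous_on {0..T} (\<lambda>t. u 0 + integral {0..t} w)"
    by (intro continuous_on_add continuous_on_const indefinite_integral_continuous_1)
  then show ?thesis
    by (rule continuous_on_eq) (erule eq[symmetric])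
qed simp

section \<open>Weak solutions on an interval are classical\<close>

definition has_second_derivative_on ::
    "real \<Rightarrow> (real \<Rightarrow> real) \<Rightarrow> (real \<Rightarrow> real) \<Rightarrow> (real \<Rightarrow> real) \<Rightarrow> bool" where
  "has_second_derivative_on T V V' f \<longleftrightarrow>
     (\<forall>t\<in>{0..T}. (V has_real_derivative V' t) (at t within {0..T}) \<and>
                 (V' has_real_derivative f t) (at t within {0..T}))"

lemma set_integral_mult_step:
  fixes w :: "real \<Rightarrow> real"
  assumes "0 \<le> s" "s \<le> Y" "set_integrable lborel {s..Y} w"
  shows "set_integrable lborel {0..Y} (\<lambda>t. w t * (if s < t then 1 else 0))"
    and "(LINT t:{0..Y}|lborel. w t * (if s < t then 1 else 0)) = (LINT t:{s..Y}|lborel. w t)"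
proof -
  have eq: "(\<lambda>t. indicator {0..Y} t *\<^sub>R (w t * (if s < t then 1 else 0))) =
      (\<lambda>t. indicator {s<..Y} t *\<^sub>R w t)"
    using assms(1) by (auto simp: indicator_def fun_eq_iff)
  have open_int: "set_integrable lborel {s<..Y} w"
    by (rule set_integrable_subset[OF assms(3)]) auto
  then show "set_integrable lborel {0..Y} (\<lambda>t. w t * (if s < t then 1 else 0))"
    unfolding set_integrable_def eq .
  have "(LINT t:{0..Y}|lborel. w t * (if s < t then 1 else 0)) = (LINT t:{s<..Y}|lborel. w t)"
    unfolding set_lebesgue_integral_def eq ..
  also have "\<dots> = (LINT t:{s..Y}|lborel. w t)"
  proof (rule set_integral_cong_set)
    show "AE x in lborel. (x \<in> {s..Y}) = (x \<in> {s<..Y})"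
      using AE_lborel_singleton[of s] by eventually_elim auto
  qed (use assms(3) open_int in \<open>auto simp: set_integrable_def set_borel_measurable_def
        intro: borel_measurable_integrable\<close>)
  finally show "(LINT t:{0..Y}|lborel. w t * (if s < t then 1 else 0)) = (LINT t:{s..Y}|lborel. w t)" .
qed

lemma set_integral_mult_pwl_deriv:
  assumes "H1_on {0..Y} u w" "\<forall>(c, s)\<in>set rs. 0 \<le> s \<and> s \<le> Y"
  shows "set_integrable lborel {0..Y} (\<lambda>t. w t * pwl_deriv rs t)"
    and "(LINT t:{0..Y}|lborel. w t * pwl_deriv rs t) = (\<Sum>(c, s)\<leftarrow>rs. c * (u Y - u s))"
proof -
  have "set_integrable lborel {0..Y} (\<lambda>t. w t * pwl_deriv rs t) \<and>
      (LINT t:{0..Y}|lborel. w t * pwl_deriv rs t) = (\<Sum>(c, s)\<leftarrow>rs. c * (u Y - u s))"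
    using assms(2)
  proof (induction rs)
    case Nil
    then show ?case by (simp add: pwl_deriv_def set_integrable_def)
  next
    case (Cons r rs)
    obtain c s where r: "r = (c, s)" by force
    with Cons.prems have s: "0 \<le> s" "s \<le> Y" by auto
    note prim = H1_on_primitive[OF assms(1), of s Y]
    note step = set_integral_mult_step[OF s prim(1)]
    have "(\<lambda>t. w t * pwl_deriv ((c, s) # rs) t) =
        (\<lambda>t. c * (w t * (if s < t then 1 else 0)) + w t * pwl_deriv rs t)"
      by (auto simp: pwl_deriv_def fun_eq_iff algebra_simps)
    then show ?case
      using Cons s step prim(2) set_integral_add[of lborel "{0..Y}"] unfolding r by auto
  qed
  then show "set_integrable lborel {0..Y} (\<lambda>t. w t * pwl_deriv rs t)"
    "(LINT t:{0..Y}|lborel. w t * pwl_deriv rs t) = (\<Sum>(c, s)\<leftarrow>rs. c * (u Y - u s))"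
    by auto
qed

lemma has_integral_mult_ramp:
  assumes "0 \<le> s" "s \<le> Y" and V: "has_second_derivative_on Y V V' f"
  shows "((\<lambda>t. f t * ramp s t) has_integral (V' Y * (Y - s) - (V Y - V s))) {0..Y}"
proof -
  have "((\<lambda>t. f t * ramp s t) has_integral 0) {0..s}"
    by (rule has_integral_is_0) (auto simp: ramp_def)
  moreover have "((\<lambda>t. f t * (t - s)) has_integral
      ((V' Y * (Y - s) - V Y) - (V' s * (s - s) - V s))) {s..Y}"
  proof (rule fundamental_theorem_of_calculus)
    fix t assume t: "t \<in> {s..Y}"
    have sub: "{s..Y} \<subseteq> {0..Y}"
      using assms by auto
    with t V have "(V has_real_derivative V' t) (at t within {s..Y})"
        "(V' has_real_derivative f t) (at t within {s..Y})"
      unfolding has_second_derivative_on_def by (auto intro: DERIV_subset[OF _ sub])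
    then have "((\<lambda>t. V' t * (t - s) - V t) has_real_derivative
        (f t * (t - s) + V' t * 1 - V' t)) (at t within {s..Y})"
      by (auto intro!: derivative_eq_intros)
    then show "((\<lambda>t. V' t * (t - s) - V t) has_vector_derivative f t * (t - s)) (at t within {s..Y})"
      by (simp add: has_real_derivative_iff_has_vector_derivative)
  qed (use assms in auto)
  then have "((\<lambda>t. f t * ramp s t) has_integral (V' Y * (Y - s) - (V Y - V s))) {s..Y}"
    by (subst has_integral_cong[where g = "\<lambda>t. f t * (t - s)"]) (auto simp: ramp_def algebra_simps)
  ultimately show ?thesis
    using has_integral_combine[OF assms(1,2)] by fastforce
qed

lemma has_integral_mult_pwl:
  assumes "0 \<le> Y" "\<forall>(c, s)\<in>set rs. 0 \<le> s \<and> s \<le> Y" and V: "has_second_derivative_on Y V V' f"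
  shows "((\<lambda>t. f t * pwl g0 rs t) has_integral
           g0 * (V' Y - V' 0) + (\<Sum>(c, s)\<leftarrow>rs. c * (V' Y * (Y - s) - (V Y - V s)))) {0..Y}"
  using assms(2)
proof (induction rs)
  case Nil
  have "(f has_integral (V' Y - V' 0)) {0..Y}"
    using V assms(1) unfolding has_second_derivative_on_def
    by (intro fundamental_theorem_of_calculus) (auto simp: has_real_derivative_iff_has_vector_derivative)
  from has_integral_mult_right[OF this, of g0] show ?case
    by (simp add: pwl_def algebra_simps)
next
  case (Cons r rs)
  obtain c s where r: "r = (c, s)" by force
  with Cons.prems have "0 \<le> s" "s \<le> Y" by auto
  from has_integral_add[OF has_integral_mult_right[OF has_integral_mult_ramp[OF this V], of c] Cons.IH]
  show ?case
    using Cons.prems unfolding r by (simp add: pwl_def algebra_simps)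
qed

text \<open>\<open>V\<close> is any classical solution of \<open>V'' = f\<close>: a double primitive of \<open>f\<close> when proving
  regularity, the solution \<open>u\<close> itself afterwards.\<close>

lemma weak_form_pwl:
  assumes "H1_on {0..Y} u w" "0 \<le> Y" "\<forall>(c, s)\<in>set rs. 0 \<le> s \<and> s \<le> Y"
    and "continuous_on {0..Y} f" "has_second_derivative_on Y V V' f"
  shows "(LINT t:{0..Y}|lborel. w t * pwl_deriv rs t + f t * pwl g0 rs t) =
          (\<Sum>(c, s)\<leftarrow>rs. c * ((u Y - V Y) - (u s - V s))) + V' Y * pwl g0 rs Y - V' 0 * g0"
proof -
  note W = set_integral_mult_pwl_deriv[OF assms(1,3)]
  have F: "set_integrable lborel {0..Y} (\<lambda>t. f t * pwl g0 rs t)"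
    by (intro borel_integrable_atLeastAtMost' continuous_intros assms(4) continuous_on_pwl)
  have "pwl g0 rs Y = g0 + (\<Sum>(c, s)\<leftarrow>rs. c * (Y - s))"
    using assms(3) by (intro pwl_eq_affine) auto
  moreover have "(\<Sum>(c, s)\<leftarrow>rs. c * (u Y - u s)) + (\<Sum>(c, s)\<leftarrow>rs. c * (V' Y * (Y - s) - (V Y - V s))) =
      (\<Sum>(c, s)\<leftarrow>rs. c * ((u Y - V Y) - (u s - V s))) + V' Y * (\<Sum>(c, s)\<leftarrow>rs. c * (Y - s))"
    by (induction rs) (auto simp: algebra_simps)
  ultimately show ?thesis
    using set_integral_add(2)[OF W(1) F] W(2)
      set_lebesgue_integral_eq_has_integral[OF F has_integral_mult_pwl[OF assms(2,3,5)]]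
    by (simp add: algebra_simps)
qed

definition prim :: "(real \<Rightarrow> real) \<Rightarrow> real \<Rightarrow> real" where
  "prim f t = integral {0..t} f"

lemma has_second_derivative_on_prim2:
  assumes f: "continuous_on {0..T} f"
  shows "has_second_derivative_on T (prim (prim f)) (prim f) f"
proof -
  have df: "(prim f has_real_derivative f t) (at t within {0..T})" if "t \<in> {0..T}" for t
    using integral_has_vector_derivative[OF f that]
    by (simp add: prim_def[abs_def] has_real_derivative_iff_has_vector_derivative)
  then have "continuous_on {0..T} (prim f)"
    by (rule DERIV_continuous_on)
  from integral_has_vector_derivative[OF this] df show ?thesis
    by (simp add: has_second_derivative_on_def prim_def[abs_def]
        has_real_derivative_iff_has_vector_derivative)
qed

lemma has_second_derivative_on_add_affine:
  assumes V: "has_second_derivative_on T V V' f" and u: "\<forall>t\<in>{0..T}. u t = a + k * t + V t"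
  shows "has_second_derivative_on T u (\<lambda>t. k + V' t) f"
  unfolding has_second_derivative_on_def
proof (intro ballI conjI)
  fix t assume t: "t \<in> {0..T}"
  with V have "((\<lambda>t. a + k * t + V t) has_real_derivative k + V' t) (at t within {0..T})"
    unfolding has_second_derivative_on_def by (auto intro!: derivative_eq_intros)
  then show "(u has_real_derivative k + V' t) (at t within {0..T})"
    by (rule has_field_derivative_transform_within[OF _ zero_less_one t]) (use u in auto)
  show "((\<lambda>t. k + V' t) has_real_derivative f t) (at t within {0..T})"
    using V t unfolding has_second_derivative_on_def by (auto intro!: derivative_eq_intros)
qed

lemma affine_if_equal_slopes:
  fixes z :: "real \<Rightarrow> real"
  assumes "0 < T"
    and slopes: "\<And>x y. 0 < x \<Longrightarrow> x < y \<Longrightarrow> y \<le> T \<Longrightarrow> (z x - z 0) / x = (z y - z x) / (y - x)"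
    and "t \<in> {0..T}"
  shows "z t = z 0 + (z T - z 0) / T * t"
proof (cases "t = 0 \<or> t = T")
  case False
  with assms have t: "0 < t" "t < T" by auto
  define m where "m = (z t - z 0) / t"
  have "z t = z 0 + m * t"
    using t by (simp add: m_def field_simps)
  moreover have "z T = z t + m * (T - t)"
    using slopes[OF t order_refl] t by (simp add: m_def field_simps)
  ultimately show ?thesis
    using assms(1) by (simp add: field_simps)
qed (use assms in auto)

text \<open>The hat function with value 0 at 0 and \<open>y\<close>, and 1 at \<open>x\<close>.\<close>

definition tent :: "real \<Rightarrow> real \<Rightarrow> (real \<times> real) list" where
  "tent x y = [(1 / x, 0), (- (1 / x + 1 / (y - x)), x), (1 / (y - x), y)]"

lemma supported_pwl_tent:
  assumes "0 < x" "x < y"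
  shows "supported_pwl y 0 (tent x y)"
proof -
  have "pwl 0 (tent x y) y = y / x - (1 / x + 1 / (y - x)) * (y - x)"
    using assms by (simp add: tent_def pwl_def ramp_def) (simp add: algebra_simps)
  also have "\<dots> = 0"
    using assms by (simp add: field_simps)
  finally show ?thesis
    using assms by (auto simp: supported_pwl_def tent_def)
qed

lemma affine_if_weak_tent:
  assumes "0 < T" "H1_on {0..T} u w" and f: "continuous_on {0..T} f"
    and tents: "\<And>x y. 0 < x \<Longrightarrow> x < y \<Longrightarrow> y \<le> T \<Longrightarrow>
      (LINT t:{0..T}|lborel. w t * pwl_deriv (tent x y) t + f t * pwl 0 (tent x y) t) = 0"
    and "t \<in> {0..T}"
  shows "u t - prim (prim f) t = u 0 + (u T - prim (prim f) T - u 0) / T * t"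
proof -
  define z where "z t = u t - prim (prim f) t" for t
  have "(z x - z 0) / x = (z y - z x) / (y - x)" if xy: "0 < x" "x < y" "y \<le> T" for x y
  proof -
    note tent = supported_pwl_tent[OF xy(1,2)]
    have "pwl 0 (tent x y) T = 0"
      using supported_pwl_vanishes(1)[OF tent xy(3)] .
    moreover have "\<forall>(c, s)\<in>set (tent x y). 0 \<le> s \<and> s \<le> T"
      using tent xy(3) by (auto simp: supported_pwl_def)
    ultimately have "(\<Sum>(c, s)\<leftarrow>tent x y. c * (z T - z s)) = 0"
      using weak_form_pwl[OF assms(2) _ _ f has_second_derivative_on_prim2[OF f], of "tent x y" 0]
        tents[OF xy] assms(1) by (simp add: z_def)
    then have "z x / x + z x / (y - x) = z 0 / x + z y / (y - x)"
      by (simp add: tent_def algebra_simps)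
    then show ?thesis
      unfolding diff_divide_distrib by linarith
  qed
  from affine_if_equal_slopes[OF assms(1) this assms(5)] show ?thesis
    by (simp add: z_def prim_def)
qed

definition nls_rhs :: "real \<Rightarrow> real \<Rightarrow> real" where
  "nls_rhs p x = x - \<bar>x\<bar> powr (p - 2) * x"

definition nls_weak :: "real \<Rightarrow> real \<Rightarrow> real \<Rightarrow> real \<Rightarrow> real \<Rightarrow> real" where
  "nls_weak p a da e de = da * de + a * e - \<bar>a\<bar> powr (p - 2) * a * e"

lemma nls_weak_eq: "nls_weak p a da e de = da * de + nls_rhs p a * e"
  by (simp add: nls_weak_def nls_rhs_def algebra_simps)

lemma nls_weak_0 [simp]: "nls_weak p a da 0 0 = 0"
  by (simp add: nls_weak_def)

lemma continuous_on_nls_rhs: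
  assumes "continuous_on S u" "\<forall>t\<in>S. 0 < u t"
  shows "continuous_on S (nls_rhs p \<circ> u)"
  unfolding nls_rhs_def o_def
  using assms by (auto intro!: continuous_intros)

definition positive_solution_on :: "real \<Rightarrow> real \<Rightarrow> (real \<Rightarrow> real) \<Rightarrow> (real \<Rightarrow> real) \<Rightarrow> bool" where
  "positive_solution_on p T u u' \<longleftrightarrow>
     has_second_derivative_on T u u' (nls_rhs p \<circ> u) \<and> (\<forall>t\<in>{0..T}. 0 < u t)"

text \<open>The derivative of a weak solution on \<open>[0, T]\<close>, obtained by integrating \<open>u'' = nls_rhs p u\<close>
  once; the integration constant is the slope of the affine function \<open>u - prim (prim u'')\<close>.\<close>

definition recovered_deriv :: "real \<Rightarrow> real \<Rightarrow> (real \<Rightarrow> real) \<Rightarrow> real \<Rightarrow> real" where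
  "recovered_deriv p T u t =
     (u T - prim (prim (nls_rhs p \<circ> u)) T - u 0) / T + prim (nls_rhs p \<circ> u) t"

lemma positive_solution_if_weak_tent:
  assumes T: "0 < T" and u: "H1_on {0..T} u w" "\<forall>t\<in>{0..T}. 0 < u t"
    and tents: "\<And>x y. 0 < x \<Longrightarrow> x < y \<Longrightarrow> y \<le> T \<Longrightarrow>
      (LINT t:{0..T}|lborel. nls_weak p (u t) (w t) (pwl 0 (tent x y) t) (pwl_deriv (tent x y) t)) = 0"
  shows "positive_solution_on p T u (recovered_deriv p T u)"
proof -
  let ?f = "nls_rhs p \<circ> u"
  have f: "continuous_on {0..T} ?f"
    using continuous_on_nls_rhs[OF continuous_on_H1_on[OF u(1)] u(2)] .
  have tents': "(LINT t:{0..T}|lborel. w t * pwl_deriv (tent x y) t + ?f t * pwl 0 (tent x y) t) = 0"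
    if "0 < x" "x < y" "y \<le> T" for x y
    using tents[OF that] by (simp add: nls_weak_eq)
  have "\<forall>t\<in>{0..T}. u t = u 0 + (u T - prim (prim ?f) T - u 0) / T * t + prim (prim ?f) t"
  proof
    fix t assume "t \<in> {0..T}"
    from affine_if_weak_tent[OF T u(1) f tents' this]
    show "u t = u 0 + (u T - prim (prim ?f) T - u 0) / T * t + prim (prim ?f) t"
      by linarith
  qed
  from has_second_derivative_on_add_affine[OF has_second_derivative_on_prim2[OF f] this] u(2)
  show ?thesis
    unfolding positive_solution_on_def recovered_deriv_def[abs_def] by simp
qed

text \<open>On a half-line the slope of \<open>u - prim (prim u'')\<close> is the same on every \<open>[0, T]\<close>, and
  \<open>T = 1\<close> fixes it.\<close>

lemma positive_solution_on_halfline_if_weak_tent: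
  assumes u: "H1_on {0..} u w" "\<forall>t\<ge>0. 0 < u t"
    and tents: "\<And>x y. 0 < x \<Longrightarrow> x < y \<Longrightarrow>
      (LINT t:{0..}|lborel. nls_weak p (u t) (w t) (pwl 0 (tent x y) t) (pwl_deriv (tent x y) t)) = 0"
    and T: "0 < T"
  shows "positive_solution_on p T u (recovered_deriv p 1 u)"
proof -
  let ?f = "nls_rhs p \<circ> u"
  let ?V = "prim (prim ?f)"
  define T' where "T' = max 1 T"
  have T': "0 < T'" "1 \<in> {0..T'}" "{0..T} \<subseteq> {0..T'}"
    by (auto simp: T'_def)
  have uT': "H1_on {0..T'} u w"
    by (rule H1_on_restrict[OF u(1)])
  have f: "continuous_on {0..T'} ?f"
    using continuous_on_nls_rhs[OF continuous_on_H1_on[OF uT']] u(2) by simp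
  have tents': "(LINT t:{0..T'}|lborel. w t * pwl_deriv (tent x y) t + ?f t * pwl 0 (tent x y) t) = 0"
    if xy: "0 < x" "x < y" "y \<le> T'" for x y
  proof -
    note tent = supported_pwl_tent[OF xy(1,2)]
    have "(LINT t:{0..}|lborel. nls_weak p (u t) (w t) (pwl 0 (tent x y) t) (pwl_deriv (tent x y) t)) =
        (LINT t:{0..T'}|lborel. nls_weak p (u t) (w t) (pwl 0 (tent x y) t) (pwl_deriv (tent x y) t))"
      by (rule set_integral_eq_if_vanishing(2)) (use supported_pwl_vanishes[OF tent] xy in auto)
    then show ?thesis
      using tents[OF xy(1,2)] by (simp add: nls_weak_eq)
  qed
  have affine: "u t - ?V t = u 0 + (u T' - ?V T' - u 0) / T' * t" if "t \<in> {0..T'}" for t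
    using affine_if_weak_tent[OF T'(1) uT' f tents' that] .
  have "(u T' - ?V T' - u 0) / T' = u 1 - ?V 1 - u 0"
    using affine[OF T'(2)] by simp
  then have "\<forall>t\<in>{0..T}. u t = u 0 + (u 1 - ?V 1 - u 0) * t + ?V t"
    using affine T'(3) by (metis add.commute diff_eq_eq subsetD)
  from has_second_derivative_on_add_affine[OF has_second_derivative_on_prim2 this]
  show ?thesis
    using continuous_on_subset[OF f T'(3)] u(2)
    unfolding positive_solution_on_def recovered_deriv_def[abs_def] by simp
qed

lemma continuous_on_positive_solution:
  assumes "positive_solution_on p T u U"
  shows "continuous_on {0..T} u" "continuous_on {0..T} U"
  using assms unfolding positive_solution_on_def has_second_derivative_on_def
  by (auto intro!: DERIV_continuous_on)

lemma weak_form_positive_solution: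
  assumes U: "positive_solution_on p Y u U" and u: "H1_on {0..Y} u w"
    and "0 \<le> Y" "\<forall>(c, s)\<in>set rs. 0 \<le> s \<and> s \<le> Y"
  shows "(LINT t:{0..Y}|lborel. nls_weak p (u t) (w t) (pwl g0 rs t) (pwl_deriv rs t)) =
    U Y * pwl g0 rs Y - U 0 * g0"
proof -
  have "continuous_on {0..Y} (nls_rhs p \<circ> u)"
    using U continuous_on_nls_rhs continuous_on_positive_solution(1)
    unfolding positive_solution_on_def by blast
  moreover have "(\<Sum>(c, s)\<leftarrow>rs. 0::real) = 0"
    by (induction rs) auto
  ultimately show ?thesis
    using weak_form_pwl[of Y u w rs "nls_rhs p \<circ> u" u U g0] U assms
    unfolding positive_solution_on_def by (simp add: nls_weak_eq)
qed

lemma weak_form_positive_solution_halfline: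
  assumes U: "\<And>T. 0 < T \<Longrightarrow> positive_solution_on p T u U" and u: "H1_on {0..} u w"
    and test: "supported_pwl Y g0 rs"
  shows "(LINT t:{0..}|lborel. nls_weak p (u t) (w t) (pwl g0 rs t) (pwl_deriv rs t)) = - U 0 * g0"
proof -
  have Y: "0 \<le> Y" "\<forall>(c, s)\<in>set rs. 0 \<le> s \<and> s \<le> Y + 1"
    using test by (auto simp: supported_pwl_def)
  have "(LINT t:{0..}|lborel. nls_weak p (u t) (w t) (pwl g0 rs t) (pwl_deriv rs t)) =
      (LINT t:{0..Y + 1}|lborel. nls_weak p (u t) (w t) (pwl g0 rs t) (pwl_deriv rs t))"
    by (rule set_integral_eq_if_vanishing(2)) (use supported_pwl_vanishes[OF test] in auto)
  also have "\<dots> = U (Y + 1) * pwl g0 rs (Y + 1) - U 0 * g0"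
    using Y by (intro weak_form_positive_solution U H1_on_restrict[OF u]) auto
  finally show ?thesis
    using supported_pwl_vanishes(1)[OF test, of "Y + 1"] by simp
qed

section \<open>Energy of a solution on an edge\<close>

definition nls_energy :: "real \<Rightarrow> real \<Rightarrow> real \<Rightarrow> real" where
  "nls_energy p a b = b\<^sup>2 / 2 - a\<^sup>2 / 2 + a powr p / p"

lemma powr_eq_square_mult:
  fixes x p :: real
  assumes "0 < x"
  shows "x powr p = x\<^sup>2 * x powr (p - 2)"
  using assms powr_add[of x 2 "p - 2"] by (simp add: powr_numeral)

lemma positive_solution_energy_const:
  assumes U: "positive_solution_on p T u U" and "p \<noteq> 0" and t: "t \<in> {0..T}"
  shows "nls_energy p (u t) (U t) = nls_energy p (u 0) (U 0)"
proof -
  have "((\<lambda>t. nls_energy p (u t) (U t)) has_real_derivative 0) (at t within {0..T})"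
    if t: "t \<in> {0..T}" for t
  proof -
    have du: "(u has_real_derivative U t) (at t within {0..T})"
      and dU: "(U has_real_derivative nls_rhs p (u t)) (at t within {0..T})"
      and pos: "0 < u t"
      using U t unfolding positive_solution_on_def has_second_derivative_on_def by auto
    have "((\<lambda>t. nls_energy p (u t) (U t)) has_real_derivative
        U t * nls_rhs p (u t) - u t * U t + u t powr (p - 1) * U t) (at t within {0..T})"
      unfolding nls_energy_def
      by (rule derivative_eq_intros DERIV_chain2[OF has_real_derivative_powr[OF pos] du] du dU
          | use \<open>p \<noteq> 0\<close> in simp)+
    moreover have "u t powr (p - 1) = u t * u t powr (p - 2)"
      using powr_mult_base[of "u t" "p - 2"] pos by simp
    ultimately show ?thesis
      using pos by (simp add: nls_rhs_def algebra_simps)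
  qed
  then obtain c where "\<forall>t\<in>{0..T}. nls_energy p (u t) (U t) = c"
    using has_field_derivative_zero_constant[OF convex_real_interval(5)] by blast
  with t show ?thesis
    by simp
qed

text \<open>Beyond \<open>p powr (1 / (p - 2))\<close> the term \<open>x powr p / p\<close> dominates \<open>x\<^sup>2\<close>, so a bound on
  \<open>x powr p / p - x\<^sup>2 / 2\<close> bounds \<open>x\<close>.\<close>

definition amplitude_bound :: "real \<Rightarrow> real \<Rightarrow> real" where
  "amplitude_bound p A = max (p powr (1 / (p - 2))) (sqrt (2 * \<bar>A\<bar>))"

lemma amplitude_bound_pos: "p > 2 \<Longrightarrow> 0 < amplitude_bound p A"
  by (simp add: amplitude_bound_def max.strict_coboundedI1)

lemma amplitude_bound_mono:
  assumes "\<bar>A\<bar> \<le> \<bar>A'\<bar>"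
  shows "amplitude_bound p A \<le> amplitude_bound p A'"
proof -
  have "sqrt (2 * \<bar>A\<bar>) \<le> sqrt (2 * \<bar>A'\<bar>)"
    using assms by simp
  then show ?thesis
    unfolding amplitude_bound_def by linarith
qed

lemma le_amplitude_bound:
  fixes x p A :: real
  assumes p: "p > 2" and x: "0 < x" and A: "x powr p / p - x\<^sup>2 / 2 \<le> A"
  shows "x \<le> amplitude_bound p A"
proof (cases "x \<le> p powr (1 / (p - 2))")
  case False
  then have "(p powr (1 / (p - 2))) powr (p - 2) \<le> x powr (p - 2)"
    using p by (intro powr_mono2) auto
  then have "p \<le> x powr (p - 2)"
    using p by (simp add: powr_powr)
  then have "p * x\<^sup>2 \<le> x powr p"
    using x powr_eq_square_mult[OF x, of p] by (simp add: mult.commute)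
  then have "x\<^sup>2 \<le> x powr p / p"
    using p by (simp add: field_simps)
  with A have "x\<^sup>2 \<le> 2 * \<bar>A\<bar>"
    by linarith
  then have "x \<le> sqrt (2 * \<bar>A\<bar>)"
    by (rule real_le_rsqrt)
  then show ?thesis
    unfolding amplitude_bound_def by linarith
qed (simp add: amplitude_bound_def)

lemma one_less_powr_if_potential_pos:
  fixes x p :: real
  assumes p: "p > 2" and x: "0 < x" and pos: "x powr p / p - x\<^sup>2 / 2 > 0"
  shows "1 < x powr (p - 2)"
proof -
  from pos have "x\<^sup>2 * p < x\<^sup>2 * (2 * x powr (p - 2))"
    using p powr_eq_square_mult[OF x, of p] by (simp add: field_simps)
  then show ?thesis
    using p x by simp
qed

lemma nls_rhs_nonpos:
  fixes p :: real
  assumes p: "p > 2" and y: "0 < y" "1 < y powr (p - 2)" and "y \<le> x"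
  shows "nls_rhs p x \<le> 0"
proof -
  have "y powr (p - 2) \<le> x powr (p - 2)"
    using assms by (intro powr_mono2) auto
  with y have "x \<le> x powr (p - 2) * x"
    using \<open>y \<le> x\<close> by (simp add: mult_le_cancel_right1)
  with y \<open>y \<le> x\<close> show ?thesis
    by (simp add: nls_rhs_def)
qed

lemma positive_solution_ftc:
  assumes U: "positive_solution_on p T u U" and ab: "0 \<le> a" "a \<le> b" "b \<le> T"
  shows "(U has_integral (u b - u a)) {a..b}"
    and "((nls_rhs p \<circ> u) has_integral (U b - U a)) {a..b}"
proof -
  have sub: "{a..b} \<subseteq> {0..T}"
    using ab by auto
  have "(u has_real_derivative U t) (at t within {a..b})"
    "(U has_real_derivative (nls_rhs p \<circ> u) t) (at t within {a..b})" if "t \<in> {a..b}" for t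
    using U that sub unfolding positive_solution_on_def has_second_derivative_on_def
    by (auto intro: DERIV_subset[OF _ sub])
  then show "(U has_integral (u b - u a)) {a..b}" "((nls_rhs p \<circ> u) has_integral (U b - U a)) {a..b}"
    using ab(2) by (auto intro!: fundamental_theorem_of_calculus
        simp: has_real_derivative_iff_has_vector_derivative[symmetric])
qed

lemma positive_solution_on_reflect:
  assumes U: "positive_solution_on p T u U"
  shows "positive_solution_on p T (\<lambda>t. u (T - t)) (\<lambda>t. - U (T - t))"
  unfolding positive_solution_on_def has_second_derivative_on_def
proof (intro ballI conjI)
  fix t assume t: "t \<in> {0..T}"
  have img: "(\<lambda>t. T - t) ` {0..T} = {0..T}"
    by (auto intro!: image_eqI[where x = "T - _"])
  have refl: "((\<lambda>t. T - t) has_real_derivative - 1) (at t within {0..T})"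
    by (auto intro!: derivative_eq_intros)
  have "T - t \<in> {0..T}"
    using t by auto
  with U have du: "(u has_real_derivative U (T - t)) (at (T - t) within (\<lambda>t. T - t) ` {0..T})"
    and dU: "(U has_real_derivative nls_rhs p (u (T - t))) (at (T - t) within (\<lambda>t. T - t) ` {0..T})"
    and pos: "0 < u (T - t)"
    unfolding positive_solution_on_def has_second_derivative_on_def img by auto
  show "((\<lambda>t. u (T - t)) has_real_derivative - U (T - t)) (at t within {0..T})"
    using DERIV_image_chain[OF du refl] by (simp add: o_def)
  show "((\<lambda>t. - U (T - t)) has_real_derivative (nls_rhs p \<circ> (\<lambda>t. u (T - t))) t) (at t within {0..T})"
    using DERIV_minus[OF DERIV_image_chain[OF dU refl]] by (simp add: o_def)
  show "0 < u (T - t)"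
    by (rule pos)
qed

lemma first_zero:
  fixes g :: "real \<Rightarrow> real"
  assumes g: "continuous_on {0..T} g" "g 0 < 0" and x1: "x1 \<in> {0..T}" "g x1 = 0"
  obtains m where "m \<in> {0..T}" "g m = 0" "\<forall>t\<in>{0..m}. g t \<le> 0"
proof -
  define Z where "Z = {0..T} \<inter> g -` {0}"
  have "closed Z"
    unfolding Z_def by (rule continuous_closed_preimage[OF g(1)]) auto
  moreover have "Z \<noteq> {}" "bdd_below Z"
    using x1 by (auto simp: Z_def intro: bdd_belowI[of _ 0])
  ultimately have m: "Inf Z \<in> Z"
    using closed_contains_Inf by blast
  have "g t \<le> 0" if t: "t \<in> {0..Inf Z}" for t
  proof (rule ccontr)
    assume "\<not> g t \<le> 0"
    moreover have "continuous_on {0..t} g"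
      using m t by (auto simp: Z_def intro: continuous_on_subset[OF g(1)])
    ultimately obtain z where z: "0 \<le> z" "z \<le> t" "g z = 0"
      using IVT'[of g 0 0 t] g(2) t by auto
    with g(2) have "z \<noteq> 0" by auto
    moreover have "z \<in> Z"
      using z t m by (auto simp: Z_def)
    then have "Inf Z \<le> z"
      by (rule cInf_lower) fact
    ultimately have "z = t" "t = Inf Z"
      using z t by auto
    with \<open>\<not> g t \<le> 0\<close> z show False
      by simp
  qed
  with m show ?thesis
    using that by (auto simp: Z_def)
qed

lemma deriv_nonneg_at_0_if_energy_pos:
  assumes p: "p > 2" and U: "positive_solution_on p T u U"
    and E: "0 < nls_energy p (u 0) (U 0)" and x1: "x1 \<in> {0..T}" "U x1 = 0"
  shows "0 \<le> U 0"
proof (rule ccontr)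
  assume "\<not> 0 \<le> U 0"
  then have neg: "U 0 < 0" by simp
  obtain m where m: "m \<in> {0..T}" "U m = 0" and nonpos: "\<forall>t\<in>{0..m}. U t \<le> 0"
    using first_zero[OF continuous_on_positive_solution(2)[OF U] neg x1] by blast
  have um: "0 < u m"
    using U m(1) unfolding positive_solution_on_def by auto
  have "nls_energy p (u m) (U m) = nls_energy p (u 0) (U 0)"
    using positive_solution_energy_const[OF U _ m(1)] p by simp
  with E m(2) have "u m powr p / p - (u m)\<^sup>2 / 2 > 0"
    by (simp add: nls_energy_def)
  from one_less_powr_if_potential_pos[OF p um this]
  have big: "1 < u m powr (p - 2)" .
  have "(nls_rhs p \<circ> u) t \<le> 0" if t: "t \<in> {0..m}" for t
  proof -
    have "0 \<le> t" "t \<le> m" "m \<le> T"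
      using t m(1) by auto
    from positive_solution_ftc(1)[OF U this]
    have "u m - u t \<le> 0"
      by (rule has_integral_le[OF _ has_integral_0]) (use nonpos t in auto)
    then show ?thesis
      using nls_rhs_nonpos[OF p um big] by simp
  qed
  moreover have "((nls_rhs p \<circ> u) has_integral (U m - U 0)) {0..m}"
    using positive_solution_ftc(2)[OF U order_refl] m(1) by simp
  ultimately have "U m - U 0 \<le> 0"
    using has_integral_le[OF _ has_integral_0] by blast
  with neg m(2) show False
    by simp
qed

lemma deriv_lower_bound_at_0:
  assumes p: "p > 2" and U: "positive_solution_on p T u U" and x1: "x1 \<in> {0..T}" "U x1 = 0"
  shows "- u 0 \<le> U 0" and "0 < nls_energy p (u 0) (U 0) \<Longrightarrow> 0 \<le> U 0"
proof -
  show pos: "0 < nls_energy p (u 0) (U 0) \<Longrightarrow> 0 \<le> U 0"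
    using deriv_nonneg_at_0_if_energy_pos[OF p U _ x1] .
  have u0: "0 < u 0"
    using U x1(1) unfolding positive_solution_on_def by auto
  show "- u 0 \<le> U 0"
  proof (cases "0 < nls_energy p (u 0) (U 0)")
    case True
    with pos u0 show ?thesis
      by linarith
  next
    case False
    moreover have "0 \<le> u 0 powr p / p"
      using p by simp
    ultimately have "(U 0)\<^sup>2 \<le> (u 0)\<^sup>2"
      unfolding nls_energy_def by linarith
    then have "\<bar>U 0\<bar> \<le> \<bar>u 0\<bar>"
      by (simp only: abs_le_square_iff)
    with u0 show ?thesis
      by linarith
  qed
qed

lemma deriv_upper_bound_at_end:
  assumes p: "p > 2" and U: "positive_solution_on p T u U" and x1: "x1 \<in> {0..T}" "U x1 = 0"
  shows "U T \<le> u T" and "0 < nls_energy p (u T) (U T) \<Longrightarrow> U T \<le> 0"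
proof -
  have "T - x1 \<in> {0..T}" "- U (T - (T - x1)) = 0"
    using x1 by auto
  note reflected = deriv_lower_bound_at_0[OF p positive_solution_on_reflect[OF U] this]
  show "U T \<le> u T"
    using reflected(1) by simp
  show "0 < nls_energy p (u T) (U T) \<Longrightarrow> U T \<le> 0"
    using reflected(2) by (simp add: nls_energy_def)
qed

lemma positive_solution_deriv_interior:
  assumes U: "positive_solution_on p T u U" and t: "0 < t" "t < T"
  shows "(u has_real_derivative U t) (at t)"
proof -
  have "(u has_real_derivative U t) (at t within {0..T})"
    using U t unfolding positive_solution_on_def has_second_derivative_on_def by auto
  moreover have "at t within {0..T} = at t"
    using t by (intro at_within_interior) auto
  ultimately show ?thesis
    by simp
qed

lemma positive_solution_critical_point:
  assumes U: "positive_solution_on p T u U" and "0 < T" "u 0 = u T"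
  obtains x1 where "x1 \<in> {0..T}" "U x1 = 0"
proof -
  have "\<exists>z. 0 < z \<and> z < T \<and> (\<lambda>v. U z * v) = (\<lambda>v. 0)"
  proof (rule Rolle_deriv[OF assms(2,3) continuous_on_positive_solution(1)[OF U]])
    fix x assume "0 < x" "x < T"
    from positive_solution_deriv_interior[OF U this]
    show "(u has_derivative (\<lambda>v. U x * v)) (at x)"
      by (simp add: has_field_derivative_def)
  qed
  then obtain z where z: "0 < z" "z < T" "(\<lambda>v. U z * v) = (\<lambda>v. 0)"
    by blast
  from fun_cong[OF z(3), of 1] have "U z = 0"
    by simp
  with z(1,2) show ?thesis
    by (intro that[of z]) auto
qed

lemma le_amplitude_bound_at_critical_point:
  assumes p: "p > 2" and U: "positive_solution_on p T u U"
    and A: "nls_energy p (u 0) (U 0) \<le> A" and x: "x \<in> {0..T}" "U x = 0"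
  shows "u x \<le> amplitude_bound p A"
proof (rule le_amplitude_bound[OF p])
  show "0 < u x"
    using U x(1) unfolding positive_solution_on_def by auto
  have "nls_energy p (u x) (U x) \<le> A"
    using positive_solution_energy_const[OF U _ x(1)] p A by simp
  with x(2) show "u x powr p / p - (u x)\<^sup>2 / 2 \<le> A"
    by (simp add: nls_energy_def)
qed

text \<open>A maximum of \<open>u\<close> is either an end point or a critical point.\<close>

lemma positive_solution_abs_le_amplitude_bound:
  assumes p: "p > 2" and U: "positive_solution_on p T u U"
    and A: "nls_energy p (u 0) (U 0) \<le> A"
    and ends: "u 0 \<le> amplitude_bound p A" "u T \<le> amplitude_bound p A" and t: "t \<in> {0..T}"
  shows "\<bar>u t\<bar> \<le> amplitude_bound p A"
proof -
  obtain x0 where x0: "x0 \<in> {0..T}" "\<forall>y\<in>{0..T}. u y \<le> u x0"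
    using continuous_attains_sup[OF compact_Icc _ continuous_on_positive_solution(1)[OF U]] t by auto
  have "u x0 \<le> amplitude_bound p A"
  proof (cases "x0 = 0 \<or> x0 = T")
    case False
    with x0(1) have x0': "0 < x0" "x0 < T"
      by auto
    have "U x0 = 0"
    proof (rule DERIV_local_max[OF positive_solution_deriv_interior[OF U x0']])
      show "0 < min x0 (T - x0)"
        using x0' by simp
      show "\<forall>y. \<bar>x0 - y\<bar> < min x0 (T - x0) \<longrightarrow> u y \<le> u x0"
        using x0(2) by (auto simp: abs_less_iff)
    qed
    with le_amplitude_bound_at_critical_point[OF p U A x0(1)] show ?thesis .
  qed (use ends in auto)
  moreover have "0 < u t"
    using U t unfolding positive_solution_on_def by auto
  ultimately show ?thesis
    using x0(2) t by force
qed

lemma nls_energy_le: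
  assumes p: "p > 2" and a: "0 < a" "a \<le> K" and d: "d \<le> D" "0 \<le> D"
    and pos: "0 < nls_energy p a d \<Longrightarrow> 0 \<le> d"
  shows "nls_energy p a d \<le> D\<^sup>2 / 2 + K powr p / p"
proof (cases "0 < nls_energy p a d")
  case True
  then have "d\<^sup>2 \<le> D\<^sup>2"
    using pos d by (intro power_mono) auto
  moreover have "a powr p / p \<le> K powr p / p"
    using a p by (intro divide_right_mono powr_mono2) auto
  moreover have "0 \<le> a\<^sup>2 / 2"
    by simp
  ultimately show ?thesis
    unfolding nls_energy_def by linarith
next
  case False
  have "0 \<le> K powr p / p" "0 \<le> D\<^sup>2 / 2"
    using p by simp_all
  with False show ?thesis
    by linarith
qed

section \<open>Zero energy on a half-line\<close>

lemma positive_solution_bounds: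
  assumes p: "p > 2" and U: "positive_solution_on p T u U" and t: "t \<in> {0..T}"
  defines "E \<equiv> nls_energy p (u 0) (U 0)"
  shows "u t \<le> amplitude_bound p E" and "\<bar>U t\<bar> \<le> sqrt (2 * \<bar>E\<bar> + (amplitude_bound p E)\<^sup>2)"
proof -
  have pos: "0 < u t"
    using U t unfolding positive_solution_on_def by auto
  have energy: "(U t)\<^sup>2 / 2 - (u t)\<^sup>2 / 2 + u t powr p / p = E"
    using positive_solution_energy_const[OF U _ t] p by (simp add: E_def nls_energy_def)
  moreover have "0 \<le> (U t)\<^sup>2 / 2" "0 \<le> u t powr p / p"
    using p by simp_all
  ultimately have "u t powr p / p - (u t)\<^sup>2 / 2 \<le> E"
    by linarith
  then show bound: "u t \<le> amplitude_bound p E"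
    by (rule le_amplitude_bound[OF p pos])
  have "(u t)\<^sup>2 \<le> (amplitude_bound p E)\<^sup>2"
    using bound pos by (intro power_mono) auto
  with energy \<open>0 \<le> u t powr p / p\<close> have "\<bar>U t\<bar>\<^sup>2 \<le> 2 * \<bar>E\<bar> + (amplitude_bound p E)\<^sup>2"
    by simp
  then show "\<bar>U t\<bar> \<le> sqrt (2 * \<bar>E\<bar> + (amplitude_bound p E)\<^sup>2)"
    by (rule real_le_rsqrt)
qed

text \<open>Virial identity: \<open>(u u')' = u'\<^sup>2 + u u''\<close>, rewritten with the conserved energy.\<close>

lemma virial_has_integral:
  assumes U: "positive_solution_on p T u U" and "0 \<le> T" "p \<noteq> 0"
  shows "((\<lambda>t. 2 * (u t)\<^sup>2 - (1 + 2 / p) * u t powr p) has_integral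
           u T * U T - u 0 * U 0 - 2 * nls_energy p (u 0) (U 0) * T) {0..T}"
proof -
  let ?E = "nls_energy p (u 0) (U 0)"
  have "((\<lambda>t. U t * U t + u t * nls_rhs p (u t)) has_integral (u T * U T - u 0 * U 0)) {0..T}"
  proof (rule fundamental_theorem_of_calculus[OF assms(2)])
    fix t assume "t \<in> {0..T}"
    with U have "((\<lambda>t. u t * U t) has_real_derivative U t * U t + u t * nls_rhs p (u t))
        (at t within {0..T})"
      unfolding positive_solution_on_def has_second_derivative_on_def
      by (auto intro!: derivative_eq_intros)
    then show "((\<lambda>t. u t * U t) has_vector_derivative U t * U t + u t * nls_rhs p (u t))
        (at t within {0..T})"
      by (simp add: has_real_derivative_iff_has_vector_derivative)
  qed
  from has_integral_diff[OF this has_integral_const_real[of "2 * ?E" 0 T]]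
  have integral: "((\<lambda>t. U t * U t + u t * nls_rhs p (u t) - 2 * ?E) has_integral
      u T * U T - u 0 * U 0 - 2 * ?E * T) {0..T}"
    using assms(2) by (simp add: algebra_simps)
  have density: "U t * U t + u t * nls_rhs p (u t) - 2 * ?E = 2 * (u t)\<^sup>2 - (1 + 2 / p) * u t powr p"
    if t: "t \<in> {0..T}" for t
  proof -
    have "(U t)\<^sup>2 = 2 * ?E + (u t)\<^sup>2 - 2 * (u t powr p / p)"
      using positive_solution_energy_const[OF U assms(3) t] by (simp add: nls_energy_def field_simps)
    moreover have "0 < u t"
      using U t unfolding positive_solution_on_def by auto
    then have "u t * nls_rhs p (u t) = (u t)\<^sup>2 - u t powr p"
      using powr_eq_square_mult[of "u t" p] by (simp add: nls_rhs_def power2_eq_square algebra_simps)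
    ultimately show ?thesis
      by (simp add: power2_eq_square algebra_simps)
  qed
  from integral show ?thesis
    by (subst (asm) has_integral_cong[OF density]) assumption
qed

lemma abs_virial_density_le:
  fixes x p B :: real
  assumes p: "p > 2" and x: "0 < x" "x \<le> B"
  shows "\<bar>2 * x\<^sup>2 - (1 + 2 / p) * x powr p\<bar> \<le> (2 + (1 + 2 / p) * B powr (p - 2)) * x\<^sup>2"
proof -
  have "x powr (p - 2) \<le> B powr (p - 2)"
    using p x by (intro powr_mono2) auto
  then have "x\<^sup>2 * x powr (p - 2) \<le> x\<^sup>2 * B powr (p - 2)"
    by (rule mult_left_mono) simp
  then have "x powr p \<le> B powr (p - 2) * x\<^sup>2"
    using powr_eq_square_mult[OF x(1), of p] by (simp add: mult.commute)
  moreover have "0 < 1 + 2 / p"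
    using p by (simp add: add_pos_pos)
  ultimately have "0 \<le> (1 + 2 / p) * x powr p" "(1 + 2 / p) * x powr p \<le> (1 + 2 / p) * B powr (p - 2) * x\<^sup>2"
    by (simp_all add: mult.assoc)
  moreover have "(2 + (1 + 2 / p) * B powr (p - 2)) * x\<^sup>2 = 2 * x\<^sup>2 + (1 + 2 / p) * B powr (p - 2) * x\<^sup>2"
    by (simp add: algebra_simps)
  moreover have "0 \<le> x\<^sup>2"
    by simp
  ultimately show ?thesis
    unfolding abs_le_iff by linarith
qed

lemma integral_le_set_integral_atLeast:
  fixes g :: "real \<Rightarrow> real"
  assumes "continuous_on {0..T} g" "set_integrable lborel {0..} g" "\<And>t. 0 \<le> g t"
  shows "integral {0..T} g \<le> (LINT t:{0..}|lborel. g t)"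
proof -
  have int: "set_integrable lborel {0..T} g"
    by (intro borel_integrable_atLeastAtMost' assms(1))
  then have "integral {0..T} g = (LINT t:{0..T}|lborel. g t)"
    by (simp add: set_borel_integral_eq_integral(2))
  also have "\<dots> \<le> (LINT t:{0..}|lborel. g t)"
    unfolding set_lebesgue_integral_def
    using int assms(2,3) unfolding set_integrable_def
    by (intro integral_mono) (auto simp: indicator_def)
  finally show ?thesis .
qed

text \<open>On a half-line the virial identity bounds \<open>|E T|\<close> uniformly in \<open>T\<close>.\<close>

lemma energy_times_length_bounded:
  assumes p: "p > 2" and U: "\<And>T. 0 < T \<Longrightarrow> positive_solution_on p T u U"
    and L2: "set_integrable lborel {0..} (\<lambda>t. (u t)\<^sup>2)"
  shows "\<exists>C. \<forall>T>0. \<bar>nls_energy p (u 0) (U 0) * T\<bar> \<le> C"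
proof -
  define E where "E = nls_energy p (u 0) (U 0)"
  define B where "B = amplitude_bound p E"
  define B' where "B' = sqrt (2 * \<bar>E\<bar> + B\<^sup>2)"
  define K where "K = 2 + (1 + 2 / p) * B powr (p - 2)"
  define S where "S = (LINT t:{0..}|lborel. (u t)\<^sup>2)"
  have U': "positive_solution_on p (t + 1) u U" and t1: "t \<in> {0..t + 1}" if "0 \<le> t" for t
    using U that by auto
  have pos: "0 < u t" if "0 \<le> t" for t
    using U'[OF that] t1[OF that] unfolding positive_solution_on_def by auto
  have bounds: "u t \<le> B" "\<bar>U t\<bar> \<le> B'" if "0 \<le> t" for t
    using positive_solution_bounds[OF p U'[OF that] t1[OF that]] by (simp_all add: B_def B'_def E_def)
  have uU: "\<bar>u t * U t\<bar> \<le> B * B'" if "0 \<le> t" for t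
    unfolding abs_mult using bounds[OF that] pos[OF that] by (intro mult_mono) auto
  have "0 \<le> K"
    using p unfolding K_def by (auto intro!: add_nonneg_nonneg)
  have "\<bar>E * T\<bar> \<le> B * B' + K * S / 2" if T: "0 < T" for T
  proof -
    have UT: "positive_solution_on p T u U"
      by (rule U[OF T])
    note uc = continuous_on_positive_solution(1)[OF UT]
    let ?h = "\<lambda>t. 2 * (u t)\<^sup>2 - (1 + 2 / p) * u t powr p"
    have vir: "(?h has_integral u T * U T - u 0 * U 0 - 2 * E * T) {0..T}"
      using virial_has_integral[OF UT] T p by (simp add: E_def)
    have "norm (integral {0..T} ?h) \<le> integral {0..T} (\<lambda>t. K * (u t)\<^sup>2)"
    proof (rule integral_norm_bound_integral)
      show "?h integrable_on {0..T}"
        using vir by blast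
      show "(\<lambda>t. K * (u t)\<^sup>2) integrable_on {0..T}"
        by (intro integrable_continuous_interval continuous_intros uc)
      fix t assume "t \<in> {0..T}"
      then show "norm (?h t) \<le> K * (u t)\<^sup>2"
        using abs_virial_density_le[OF p pos bounds(1)] by (simp add: K_def)
    qed
    then have "\<bar>u T * U T - u 0 * U 0 - 2 * E * T\<bar> \<le> integral {0..T} (\<lambda>t. K * (u t)\<^sup>2)"
      using integral_unique[OF vir] by simp
    also have "\<dots> \<le> K * S"
      unfolding integral_mult_right S_def using \<open>0 \<le> K\<close>
      by (intro mult_left_mono integral_le_set_integral_atLeast L2 continuous_intros uc) auto
    moreover have "\<bar>2 * E * T\<bar> = 2 * \<bar>E * T\<bar>"
      by (simp add: abs_mult)
    ultimately show ?thesis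
      using uU[of T] uU[of 0] T by linarith
  qed
  then show ?thesis
    unfolding E_def by blast
qed

lemma energy_zero_if_square_integrable:
  assumes "p > 2" "\<And>T. 0 < T \<Longrightarrow> positive_solution_on p T u U"
    and "set_integrable lborel {0..} (\<lambda>t. (u t)\<^sup>2)"
  shows "nls_energy p (u 0) (U 0) = 0"
proof (rule ccontr)
  assume E: "nls_energy p (u 0) (U 0) \<noteq> 0"
  obtain C where C: "\<And>T. 0 < T \<Longrightarrow> \<bar>nls_energy p (u 0) (U 0) * T\<bar> \<le> C"
    using energy_times_length_bounded[OF assms] by blast
  define T where "T = (\<bar>C\<bar> + 1) / \<bar>nls_energy p (u 0) (U 0)\<bar>"
  with E have "0 < T" "\<bar>nls_energy p (u 0) (U 0) * T\<bar> = \<bar>C\<bar> + 1"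
    by (auto simp: abs_mult add_pos_nonneg)
  with C[of T] show False
    by linarith
qed

section \<open>Bound states on the single-knot graph\<close>

lemma sum_if_single:
  fixes f :: "nat \<Rightarrow> 'a \<Rightarrow> real"
  assumes "i0 < n" "\<And>i. f i b = 0"
  shows "(\<Sum>i<n. f i (if i = i0 then a else b)) = f i0 a"
proof -
  have "(\<Sum>i<n. f i (if i = i0 then a else b)) = (\<Sum>i<n. if i = i0 then f i0 a else 0)"
    using assms(2) by (intro sum.cong) auto
  with assms(1) show ?thesis
    by simp
qed

lemma le_of_balanced_sum:
  fixes a b d e :: "nat \<Rightarrow> real"
  assumes balance: "(\<Sum>i<H. a i) + (\<Sum>j<P. b j) + (\<Sum>k<L. d k + e k) = 0" and "0 \<le> c"
    and a: "\<forall>i<H. - c \<le> a i" and b: "\<forall>j<P. - c \<le> b j" and de: "\<forall>k<L. - c \<le> d k \<and> - c \<le> e k"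
  shows "j < P \<Longrightarrow> b j \<le> (real H + real P + 2 * real L) * c"
    and "k < L \<Longrightarrow> d k \<le> (real H + real P + 2 * real L) * c"
proof -
  define A where "A = (\<Sum>i<H. a i + c)"
  define B where "B = (\<Sum>j<P. b j + c)"
  define DE where "DE = (\<Sum>k<L. (d k + c) + (e k + c))"
  have "A + B + DE = (real H + real P + 2 * real L) * c"
    using balance by (simp add: A_def B_def DE_def sum.distrib algebra_simps)
  moreover have "0 \<le> A" "0 \<le> B" "0 \<le> DE"
    using a b de unfolding A_def B_def DE_def by (auto intro!: sum_nonneg)
  moreover have "j < P \<Longrightarrow> b j + c \<le> B" "k < L \<Longrightarrow> (d k + c) + (e k + c) \<le> DE"
    using b de unfolding B_def DE_def by (auto intro!: member_le_sum)
  ultimately show "j < P \<Longrightarrow> b j \<le> (real H + real P + 2 * real L) * c"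
    "k < L \<Longrightarrow> d k \<le> (real H + real P + 2 * real L) * c"
    using de \<open>0 \<le> c\<close> by force+
qed

definition vertex_outflow_bound :: "real \<Rightarrow> nat \<Rightarrow> nat \<Rightarrow> nat \<Rightarrow> real" where
  "vertex_outflow_bound p H P L = (real H + real P + 2 * real L) * amplitude_bound p 0"

definition core_energy_bound :: "real \<Rightarrow> nat \<Rightarrow> nat \<Rightarrow> nat \<Rightarrow> real" where
  "core_energy_bound p H P L =
     (vertex_outflow_bound p H P L)\<^sup>2 / 2 + amplitude_bound p 0 powr p / p"

definition core_bound :: "real \<Rightarrow> nat \<Rightarrow> nat \<Rightarrow> nat \<Rightarrow> real" where
  "core_bound p H P L = amplitude_bound p (core_energy_bound p H P L)"

locale knot_bound_state =
  fixes p :: real and H P L :: nat and l :: real and u :: gfun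
  assumes p_gt_2: "p > 2" and H_pos: "1 \<le> H" and l_pos: "0 < l"
    and bound_state: "bound_state p H P L l u" and positive: "positive_g H P L l u"
begin

definition du :: gfun where
  "du = (SOME du. H1_graph H P L l u du)"

lemma H1_graph_du: "H1_graph H P L l u du"
  using bound_state someI_ex[of "H1_graph H P L l u"] unfolding bound_state_def du_def by blast

lemma H1_on_edges:
  "i < H \<Longrightarrow> H1_on {0..} (hl u i) (hl du i)"
  "j < P \<Longrightarrow> H1_on {0..l} (pd u j) (pd du j)"
  "k < L \<Longrightarrow> H1_on {0..2 * l} (lp u k) (lp du k)"
  using H1_graph_du unfolding H1_graph_def by auto

definition vertex_value :: real where
  "vertex_value = hl u 0 0"

lemma vertex_value_edges:
  "i < H \<Longrightarrow> hl u i 0 = vertex_value"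
  "j < P \<Longrightarrow> pd u j 0 = vertex_value"
  "k < L \<Longrightarrow> lp u k 0 = vertex_value"
  "k < L \<Longrightarrow> lp u k (2 * l) = vertex_value"
  using H1_graph_du H_pos unfolding H1_graph_def vertex_value_def by auto

lemma positive_edges:
  "i < H \<Longrightarrow> \<forall>t\<ge>0. 0 < hl u i t"
  "j < P \<Longrightarrow> \<forall>t\<in>{0..l}. 0 < pd u j t"
  "k < L \<Longrightarrow> \<forall>t\<in>{0..2 * l}. 0 < lp u k t"
  using positive unfolding positive_g_def by auto

lemma vertex_value_pos: "0 < vertex_value"
  using positive_edges(1)[of 0] vertex_value_edges(1)[of 0] H_pos by auto

lemma weak_eq_pwl:
  assumes "\<forall>i<H. supported_pwl Y cv (rh i)"
    and "\<forall>j<P. \<forall>(c, s)\<in>set (rp j). 0 \<le> s" "\<forall>k<L. \<forall>(c, s)\<in>set (rl k). 0 \<le> s"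
    and "\<forall>k<L. pwl cv (rl k) (2 * l) = cv"
  shows "(\<Sum>i<H. LINT t:{0..}|lborel.
            nls_weak p (hl u i t) (hl du i t) (pwl cv (rh i) t) (pwl_deriv (rh i) t)) +
         (\<Sum>j<P. LINT t:{0..l}|lborel.
            nls_weak p (pd u j t) (pd du j t) (pwl cv (rp j) t) (pwl_deriv (rp j) t)) +
         (\<Sum>k<L. LINT t:{0..2 * l}|lborel.
            nls_weak p (lp u k t) (lp du k t) (pwl cv (rl k) t) (pwl_deriv (rl k) t)) = 0"
proof -
  define eta :: gfun where "eta = (\<lambda>i. pwl cv (rh i), \<lambda>j. pwl cv (rp j), \<lambda>k. pwl cv (rl k))"
  define deta :: gfun where "deta = (\<lambda>i. pwl_deriv (rh i), \<lambda>j. pwl_deriv (rp j), \<lambda>k. pwl_deriv (rl k))"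
  have "H1_graph H P L l eta deta"
    unfolding H1_graph_def
  proof (intro conjI allI impI exI[of _ cv])
    fix i assume "i < H"
    with assms(1) have "supported_pwl Y cv (rh i)" "\<forall>(c, s)\<in>set (rh i). 0 \<le> s"
      by (auto simp: supported_pwl_def)
    then show "H1_on {0..} (hl eta i) (hl deta i)" "hl eta i 0 = cv"
      by (auto simp: eta_def deta_def hl_def H1_on_supported_pwl pwl_at_0)
  next
    fix j assume "j < P"
    with assms(2) show "H1_on {0..l} (pd eta j) (pd deta j)" "pd eta j 0 = cv"
      by (auto simp: eta_def deta_def pd_def H1_on_pwl pwl_at_0)
  next
    fix k assume "k < L"
    with assms(3,4) show "H1_on {0..2 * l} (lp eta k) (lp deta k)" "lp eta k 0 = cv"
      "lp eta k (2 * l) = cv"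
      by (auto simp: eta_def deta_def lp_def H1_on_pwl pwl_at_0)
  qed
  with bound_state H1_graph_du
  have "graph_int H P L l (nls_weak p) u du eta deta = 0"
    unfolding bound_state_def nls_weak_def[abs_def] by blast
  then show ?thesis
    by (simp add: graph_int_def eta_def deta_def hl_def pd_def lp_def)
qed

lemma weak_eq_halfline_test:
  assumes "i0 < H" "supported_pwl Y 0 rs"
  shows "(LINT t:{0..}|lborel. nls_weak p (hl u i0 t) (hl du i0 t) (pwl 0 rs t) (pwl_deriv rs t)) = 0"
proof -
  have "supported_pwl Y 0 []"
    using assms(2) by (simp add: supported_pwl_def)
  with weak_eq_pwl[of Y 0 "\<lambda>i. if i = i0 then rs else []" "\<lambda>_. []" "\<lambda>_. []"] assms(2)
  have "(\<Sum>i<H. LINT t:{0..}|lborel. nls_weak p (hl u i t) (hl du i t)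
      (pwl 0 (if i = i0 then rs else []) t) (pwl_deriv (if i = i0 then rs else []) t)) = 0"
    by simp
  with sum_if_single[OF assms(1), of "\<lambda>i r. LINT t:{0..}|lborel.
      nls_weak p (hl u i t) (hl du i t) (pwl 0 r t) (pwl_deriv r t)" "[]" rs]
  show ?thesis
    by simp
qed

lemma weak_eq_pendant_test:
  assumes "j0 < P" "\<forall>(c, s)\<in>set rs. 0 \<le> s"
  shows "(LINT t:{0..l}|lborel. nls_weak p (pd u j0 t) (pd du j0 t) (pwl 0 rs t) (pwl_deriv rs t)) = 0"
proof -
  have "supported_pwl 0 0 []"
    by (simp add: supported_pwl_def)
  with weak_eq_pwl[of 0 0 "\<lambda>_. []" "\<lambda>j. if j = j0 then rs else []" "\<lambda>_. []"] assms(2)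
  have "(\<Sum>j<P. LINT t:{0..l}|lborel. nls_weak p (pd u j t) (pd du j t)
      (pwl 0 (if j = j0 then rs else []) t) (pwl_deriv (if j = j0 then rs else []) t)) = 0"
    by simp
  with sum_if_single[OF assms(1), of "\<lambda>j r. LINT t:{0..l}|lborel.
      nls_weak p (pd u j t) (pd du j t) (pwl 0 r t) (pwl_deriv r t)" "[]" rs]
  show ?thesis
    by simp
qed

lemma weak_eq_loop_test:
  assumes "k0 < L" "\<forall>(c, s)\<in>set rs. 0 \<le> s" "pwl 0 rs (2 * l) = 0"
  shows "(LINT t:{0..2 * l}|lborel. nls_weak p (lp u k0 t) (lp du k0 t) (pwl 0 rs t) (pwl_deriv rs t)) = 0"
proof -
  have "supported_pwl 0 0 []"
    by (simp add: supported_pwl_def)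
  with weak_eq_pwl[of 0 0 "\<lambda>_. []" "\<lambda>_. []" "\<lambda>k. if k = k0 then rs else []"] assms(2,3)
  have "(\<Sum>k<L. LINT t:{0..2 * l}|lborel. nls_weak p (lp u k t) (lp du k t)
      (pwl 0 (if k = k0 then rs else []) t) (pwl_deriv (if k = k0 then rs else []) t)) = 0"
    by simp
  with sum_if_single[OF assms(1), of "\<lambda>k r. LINT t:{0..2 * l}|lborel.
      nls_weak p (lp u k t) (lp du k t) (pwl 0 r t) (pwl_deriv r t)" "[]" rs]
  show ?thesis
    by simp
qed

abbreviation hl_deriv :: "nat \<Rightarrow> real \<Rightarrow> real" where
  "hl_deriv i \<equiv> recovered_deriv p 1 (hl u i)"

abbreviation pd_deriv :: "nat \<Rightarrow> real \<Rightarrow> real" where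
  "pd_deriv j \<equiv> recovered_deriv p l (pd u j)"

abbreviation lp_deriv :: "nat \<Rightarrow> real \<Rightarrow> real" where
  "lp_deriv k \<equiv> recovered_deriv p (2 * l) (lp u k)"

lemma positive_solution_halfline:
  "i < H \<Longrightarrow> 0 < T \<Longrightarrow> positive_solution_on p T (hl u i) (hl_deriv i)"
  by (rule positive_solution_on_halfline_if_weak_tent[OF H1_on_edges(1) positive_edges(1)])
    (auto intro: weak_eq_halfline_test supported_pwl_tent)

lemma positive_solution_pendant: "j < P \<Longrightarrow> positive_solution_on p l (pd u j) (pd_deriv j)"
  by (rule positive_solution_if_weak_tent[OF l_pos H1_on_edges(2) positive_edges(2)])
    (auto intro!: weak_eq_pendant_test simp: tent_def)

lemma positive_solution_loop:
  "k < L \<Longrightarrow> positive_solution_on p (2 * l) (lp u k) (lp_deriv k)"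
proof (rule positive_solution_if_weak_tent[OF _ H1_on_edges(3) positive_edges(3)])
  fix x y assume "0 < x" "x < y" "y \<le> 2 * l" and k: "k < L"
  with supported_pwl_tent[of x y] show "(LINT t:{0..2 * l}|lborel. nls_weak p (lp u k t) (lp du k t)
      (pwl 0 (tent x y) t) (pwl_deriv (tent x y) t)) = 0"
    by (intro weak_eq_loop_test k) (auto simp: supported_pwl_vanishes(1) tent_def)
qed (use l_pos in auto)

lemma weak_eq_halfline_boundary:
  "i < H \<Longrightarrow> supported_pwl Y g0 rs \<Longrightarrow>
    (LINT t:{0..}|lborel. nls_weak p (hl u i t) (hl du i t) (pwl g0 rs t) (pwl_deriv rs t)) =
    - hl_deriv i 0 * g0"
  by (rule weak_form_positive_solution_halfline[OF positive_solution_halfline H1_on_edges(1)])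

lemma weak_eq_pendant_boundary:
  "j < P \<Longrightarrow> \<forall>(c, s)\<in>set rs. 0 \<le> s \<and> s \<le> l \<Longrightarrow>
    (LINT t:{0..l}|lborel. nls_weak p (pd u j t) (pd du j t) (pwl g0 rs t) (pwl_deriv rs t)) =
    pd_deriv j l * pwl g0 rs l - pd_deriv j 0 * g0"
  using l_pos by (intro weak_form_positive_solution[OF positive_solution_pendant H1_on_edges(2)]) auto

lemma weak_eq_loop_boundary:
  "k < L \<Longrightarrow> \<forall>(c, s)\<in>set rs. 0 \<le> s \<and> s \<le> 2 * l \<Longrightarrow>
    (LINT t:{0..2 * l}|lborel. nls_weak p (lp u k t) (lp du k t) (pwl g0 rs t) (pwl_deriv rs t)) =
    lp_deriv k (2 * l) * pwl g0 rs (2 * l) - lp_deriv k 0 * g0"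
  using l_pos by (intro weak_form_positive_solution[OF positive_solution_loop H1_on_edges(3)]) auto

lemma neumann_pendant:
  assumes "j < P"
  shows "pd_deriv j l = 0"
proof -
  have "pwl 0 [(1, 0)] l = l"
    using l_pos by (simp add: pwl_def ramp_def)
  with weak_eq_pendant_test[OF assms, of "[(1, 0)]"] weak_eq_pendant_boundary[OF assms, of "[(1, 0)]" 0]
  have "pd_deriv j l * l = 0"
    using l_pos by simp
  with l_pos show ?thesis
    by simp
qed

lemma kirchhoff:
  "(\<Sum>i<H. hl_deriv i 0) + (\<Sum>j<P. pd_deriv j 0) + (\<Sum>k<L. lp_deriv k 0 - lp_deriv k (2 * l)) = 0"
proof -
  define rh :: "(real \<times> real) list" where "rh = [(-1, 0), (1, 1)]"
  have rh: "supported_pwl 1 1 rh"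
    by (simp add: supported_pwl_def rh_def pwl_def ramp_def)
  from weak_eq_pwl[of 1 1 "\<lambda>_. rh" "\<lambda>_. []" "\<lambda>_. []"] rh
  have "(\<Sum>i<H. LINT t:{0..}|lborel. nls_weak p (hl u i t) (hl du i t) (pwl 1 rh t) (pwl_deriv rh t)) +
      (\<Sum>j<P. LINT t:{0..l}|lborel. nls_weak p (pd u j t) (pd du j t) (pwl 1 [] t) (pwl_deriv [] t)) +
      (\<Sum>k<L. LINT t:{0..2 * l}|lborel. nls_weak p (lp u k t) (lp du k t) (pwl 1 [] t) (pwl_deriv [] t)) = 0"
    by simp
  also have "(\<Sum>i<H. LINT t:{0..}|lborel. nls_weak p (hl u i t) (hl du i t) (pwl 1 rh t) (pwl_deriv rh t)) =
      (\<Sum>i<H. - hl_deriv i 0)"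
    using weak_eq_halfline_boundary[OF _ rh] by simp
  also have "(\<Sum>j<P. LINT t:{0..l}|lborel. nls_weak p (pd u j t) (pd du j t) (pwl 1 [] t) (pwl_deriv [] t)) =
      (\<Sum>j<P. - pd_deriv j 0)"
    using weak_eq_pendant_boundary[of _ "[]" 1] neumann_pendant by simp
  also have "(\<Sum>k<L. LINT t:{0..2 * l}|lborel. nls_weak p (lp u k t) (lp du k t) (pwl 1 [] t) (pwl_deriv [] t)) =
      (\<Sum>k<L. lp_deriv k (2 * l) - lp_deriv k 0)"
    using weak_eq_loop_boundary[of _ "[]" 1] by simp
  finally show ?thesis
    by (simp add: sum_negf sum_subtractf)
qed


lemma halfline_energy_zero: "i < H \<Longrightarrow> nls_energy p vertex_value (hl_deriv i 0) = 0"
  using energy_zero_if_square_integrable[OF p_gt_2 positive_solution_halfline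
      H1_on_square_integrable[OF H1_on_edges(1)]] vertex_value_edges(1)
  by simp

lemma vertex_value_le: "vertex_value \<le> amplitude_bound p 0"
proof (rule le_amplitude_bound[OF p_gt_2 vertex_value_pos])
  have "0 \<le> (hl_deriv 0 0)\<^sup>2 / 2"
    by simp
  moreover have "0 < H"
    using H_pos by simp
  ultimately show "vertex_value powr p / p - vertex_value\<^sup>2 / 2 \<le> 0"
    using halfline_energy_zero[of 0] unfolding nls_energy_def by linarith
qed

lemma halfline_deriv_lower: "i < H \<Longrightarrow> - vertex_value \<le> hl_deriv i 0"
proof -
  assume i: "i < H"
  have "0 \<le> vertex_value powr p / p"
    using p_gt_2 by simp
  with halfline_energy_zero[OF i] have "(hl_deriv i 0)\<^sup>2 \<le> vertex_value\<^sup>2"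
    unfolding nls_energy_def by linarith
  then have "\<bar>hl_deriv i 0\<bar> \<le> \<bar>vertex_value\<bar>"
    by (simp only: abs_le_square_iff)
  then show ?thesis
    by (simp add: abs_le_iff abs_of_pos[OF vertex_value_pos])
qed

lemma pendant_deriv_lower:
  assumes "j < P"
  shows "- vertex_value \<le> pd_deriv j 0"
    and "0 < nls_energy p vertex_value (pd_deriv j 0) \<Longrightarrow> 0 \<le> pd_deriv j 0"
  using deriv_lower_bound_at_0[OF p_gt_2 positive_solution_pendant[OF assms], of l]
    neumann_pendant[OF assms] vertex_value_edges(2)[OF assms] l_pos
  by auto

lemma loop_deriv_bounds:
  assumes "k < L"
  shows "- vertex_value \<le> lp_deriv k 0"
    and "0 < nls_energy p vertex_value (lp_deriv k 0) \<Longrightarrow> 0 \<le> lp_deriv k 0"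
    and "lp_deriv k (2 * l) \<le> vertex_value"
proof -
  note U = positive_solution_loop[OF assms]
  obtain x1 where "x1 \<in> {0..2 * l}" "lp_deriv k x1 = 0"
    using positive_solution_critical_point[OF U] l_pos vertex_value_edges(3,4)[OF assms] by auto
  note lower = deriv_lower_bound_at_0[OF p_gt_2 U this] and upper = deriv_upper_bound_at_end[OF p_gt_2 U this]
  show "- vertex_value \<le> lp_deriv k 0"
    "0 < nls_energy p vertex_value (lp_deriv k 0) \<Longrightarrow> 0 \<le> lp_deriv k 0"
    "lp_deriv k (2 * l) \<le> vertex_value"
    using lower upper(1) vertex_value_edges(3,4)[OF assms] by auto
qed

text \<open>Every outflow at the vertex is at least \<open>- vertex_value\<close> and by Kirchhoff they sum to zero,
  so each one is bounded above as well.\<close>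

lemma vertex_deriv_le:
  shows "j < P \<Longrightarrow> pd_deriv j 0 \<le> vertex_outflow_bound p H P L"
    and "k < L \<Longrightarrow> lp_deriv k 0 \<le> vertex_outflow_bound p H P L"
proof -
  have balance: "(\<Sum>i<H. hl_deriv i 0) + (\<Sum>j<P. pd_deriv j 0) +
      (\<Sum>k<L. lp_deriv k 0 + - lp_deriv k (2 * l)) = 0"
    using kirchhoff by simp
  have lower: "\<forall>i<H. - vertex_value \<le> hl_deriv i 0" "\<forall>j<P. - vertex_value \<le> pd_deriv j 0"
    "\<forall>k<L. - vertex_value \<le> lp_deriv k 0 \<and> - vertex_value \<le> - lp_deriv k (2 * l)"
    using halfline_deriv_lower pendant_deriv_lower(1) loop_deriv_bounds(1,3) by auto
  note bound = le_of_balanced_sum[OF balance less_imp_le[OF vertex_value_pos] lower]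
  have "(real H + real P + 2 * real L) * vertex_value \<le> vertex_outflow_bound p H P L"
    unfolding vertex_outflow_bound_def using vertex_value_le by (intro mult_left_mono) auto
  with bound show "j < P \<Longrightarrow> pd_deriv j 0 \<le> vertex_outflow_bound p H P L"
    "k < L \<Longrightarrow> lp_deriv k 0 \<le> vertex_outflow_bound p H P L"
    by (meson order_trans)+
qed

lemma core_energy_le:
  shows "j < P \<Longrightarrow> nls_energy p vertex_value (pd_deriv j 0) \<le> core_energy_bound p H P L"
    and "k < L \<Longrightarrow> nls_energy p vertex_value (lp_deriv k 0) \<le> core_energy_bound p H P L"
proof -
  have "0 \<le> vertex_outflow_bound p H P L"
    unfolding vertex_outflow_bound_def
    using amplitude_bound_pos[OF p_gt_2, of 0] by simp
  note energy_le = nls_energy_le[OF p_gt_2 vertex_value_pos vertex_value_le _ this]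
  show "j < P \<Longrightarrow> nls_energy p vertex_value (pd_deriv j 0) \<le> core_energy_bound p H P L"
    using energy_le vertex_deriv_le(1) pendant_deriv_lower(2) unfolding core_energy_bound_def by blast
  show "k < L \<Longrightarrow> nls_energy p vertex_value (lp_deriv k 0) \<le> core_energy_bound p H P L"
    using energy_le vertex_deriv_le(2) loop_deriv_bounds(2) unfolding core_energy_bound_def by blast
qed

lemma vertex_value_le_core_bound: "vertex_value \<le> core_bound p H P L"
proof -
  have "0 \<le> core_energy_bound p H P L"
    unfolding core_energy_bound_def using p_gt_2 by simp
  then have "amplitude_bound p 0 \<le> core_bound p H P L"
    unfolding core_bound_def by (intro amplitude_bound_mono) simp
  with vertex_value_le show ?thesis
    by simp
qed

lemma core_bounded: "core_bounded_by P L l u (core_bound p H P L)"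
  unfolding core_bounded_by_def
proof (intro conjI allI impI ballI)
  fix j x assume j: "j < P" and x: "x \<in> {0..l}"
  note U = positive_solution_pendant[OF j]
  have E: "nls_energy p (pd u j 0) (pd_deriv j 0) \<le> core_energy_bound p H P L"
    using core_energy_le(1)[OF j] vertex_value_edges(2)[OF j] by simp
  have "pd u j l \<le> core_bound p H P L"
    unfolding core_bound_def
    using le_amplitude_bound_at_critical_point[OF p_gt_2 U E _ neumann_pendant[OF j]] l_pos by simp
  with positive_solution_abs_le_amplitude_bound[OF p_gt_2 U E _ _ x] vertex_value_le_core_bound
    vertex_value_edges(2)[OF j]
  show "\<bar>pd u j x\<bar> \<le> core_bound p H P L"
    unfolding core_bound_def by simp
next
  fix k x assume k: "k < L" and x: "x \<in> {0..2 * l}"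
  have E: "nls_energy p (lp u k 0) (lp_deriv k 0) \<le> core_energy_bound p H P L"
    using core_energy_le(2)[OF k] vertex_value_edges(3)[OF k] by simp
  from positive_solution_abs_le_amplitude_bound[OF p_gt_2 positive_solution_loop[OF k] E _ _ x]
    vertex_value_le_core_bound vertex_value_edges(3,4)[OF k]
  show "\<bar>lp u k x\<bar> \<le> core_bound p H P L"
    unfolding core_bound_def by simp
qed

end

theorem lemma3p6:
  fixes p :: real and H P L :: nat
  assumes "p > 2" and "H \<ge> 1"
  shows "\<exists>M>0. \<exists>lbar>0. \<forall>l. 0 < l \<and> l < lbar \<longrightarrow>
           (\<forall>u. bound_state p H P L l u \<and> positive_g H P L l u \<longrightarrow> core_bounded_by P L l u M)"
proof (intro exI conjI allI impI)
  show "0 < core_bound p H P L"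
    unfolding core_bound_def by (rule amplitude_bound_pos[OF assms(1)])
  show "(0::real) < 1"
    by simp
  fix l u assume "0 < l \<and> l < 1" "bound_state p H P L l u \<and> positive_g H P L l u"
  with assms interpret knot_bound_state p H P L l u
    by unfold_locales auto
  show "core_bounded_by P L l u (core_bound p H P L)"
    by (rule core_bounded)
qed

end
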